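(* Let $X$ be a topological space such that the diagonal $\Delta X=\{(x,x):x\in X\}$ is statistically closed in $X\times X$. Then every statistically compact subspace of $X$ is statistically closed in $X$.
   Context: For $A\subseteq\mathbb{N}$ let $d_n(A)=|A\cap\{1,\dots,n\}|/n$, $\overline{d}(A)=\limsup_n d_n(A)$, $\underline{d}(A)=\liminf_n d_n(A)$, and $d(A)$ their common value when equal. A sequence in $X$ is a map from an infinite subset $M\subseteq\mathbb{N}$ into $X$, written $(x_n)_{n\in M}$; a subsequence is $(x_n)_{n\in N}$ with $N\subseteq M$ infinite. It is nonthin if $\overline{d}(M)>0$. A nonthin sequence $(x_n)_{n\in M}$ is statistically convergent to $a\in X$ if for every open $U\ni a$, $d(\{n\in M:x_n\notin U\})=0$. The statistical closure $\overline{F}^{ST}$ of $F\subseteq X$ is the set of $x\in X$ such that some nonthin sequence in $F$ is statistically convergent to $x$; $F$ is statistically closed if $\overline{F}^{ST}=F$. A topological space is statistically compact if every nonthin sequence in it has a nonthin subsequence that is statistically convergent to some point of the space; a subset is statistically compact if it is so in the subspace topology. *)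

theory Defs
  imports "HOL-Analysis.Analysis"
begin

definition dens_n :: "nat set \<Rightarrow> nat \<Rightarrow> real" where
  "dens_n A n = real (card (A \<inter> {1..n})) / real n"

definition upper_density :: "nat set \<Rightarrow> ereal" where
  "upper_density A = limsup (\<lambda>n. ereal (dens_n A n))"

definition density_zero :: "nat set \<Rightarrow> bool" where
  "density_zero A \<longleftrightarrow> (\<lambda>n. dens_n A n) \<longlonglongrightarrow> 0"

definition nonthin :: "nat set \<Rightarrow> bool" where
  "nonthin M \<longleftrightarrow> infinite M \<and> upper_density M > 0"

text \<open>the nonthin sequence (x_n)_{n\<in>M} is statistically convergent to a in the space X\<close>
definition stat_conv :: "'a topology \<Rightarrow> (nat \<Rightarrow> 'a) \<Rightarrow> nat set \<Rightarrow> 'a \<Rightarrow> bool" where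
  "stat_conv X x M a \<longleftrightarrow> nonthin M \<and> (\<forall>n\<in>M. x n \<in> topspace X) \<and> a \<in> topspace X \<and>
     (\<forall>U. openin X U \<and> a \<in> U \<longrightarrow> density_zero {n \<in> M. x n \<notin> U})"

definition stat_closure :: "'a topology \<Rightarrow> 'a set \<Rightarrow> 'a set" where
  "stat_closure X F = {a \<in> topspace X. \<exists>x M. nonthin M \<and> (\<forall>n\<in>M. x n \<in> F) \<and> stat_conv X x M a}"

definition stat_closed :: "'a topology \<Rightarrow> 'a set \<Rightarrow> bool" where
  "stat_closed X F \<longleftrightarrow> stat_closure X F = F"

definition stat_compact :: "'a topology \<Rightarrow> bool" where
  "stat_compact X \<longleftrightarrow> (\<forall>x M. nonthin M \<and> (\<forall>n\<in>M. x n \<in> topspace X) \<longrightarrow>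
     (\<exists>N. N \<subseteq> M \<and> nonthin N \<and> (\<exists>a\<in>topspace X. stat_conv X x N a)))"

end

theory Submission
  imports Defs
begin

text \<open>If the diagonal is statistically closed, statistical limits are unique: two limits a, b
  of the same sequence x make (a, b) a statistical limit of the diagonal sequence (x n, x n).
  Given a statistical limit a of a sequence in a statistically compact K, compactness supplies
  a nonthin subsequence converging statistically to some b \<in> K; the subsequence still converges
  to a, hence a = b \<in> K.\<close>

lemma dens_n_nonneg: "0 \<le> dens_n A n"
  unfolding dens_n_def by simp

lemma dens_n_mono: "A \<subseteq> B \<Longrightarrow> dens_n A n \<le> dens_n B n"
  unfolding dens_n_def by (intro divide_right_mono) (auto intro!: card_mono)

lemma dens_n_Un_le: "dens_n (A \<union> B) n \<le> dens_n A n + dens_n B n"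
proof -
  have "card ((A \<union> B) \<inter> {1..n}) \<le> card (A \<inter> {1..n}) + card (B \<inter> {1..n})"
    by (metis Int_Un_distrib2 card_Un_le)
  then show ?thesis
    unfolding dens_n_def by (simp add: add_divide_distrib[symmetric] divide_right_mono)
qed

lemma density_zero_empty: "density_zero {}"
  unfolding density_zero_def dens_n_def by simp

lemma density_zero_subset: "A \<subseteq> B \<Longrightarrow> density_zero B \<Longrightarrow> density_zero A"
  unfolding density_zero_def
  by (rule tendsto_sandwich[of "\<lambda>_. 0" _ _ "\<lambda>n. dens_n B n"])
     (auto simp: dens_n_nonneg dens_n_mono)

lemma density_zero_Un: "density_zero A \<Longrightarrow> density_zero B \<Longrightarrow> density_zero (A \<union> B)"
  unfolding density_zero_def
  by (rule tendsto_sandwich[of "\<lambda>_. 0" _ _ "\<lambda>n. dens_n A n + dens_n B n"])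
     (auto simp: dens_n_nonneg dens_n_Un_le intro: tendsto_add_zero)

lemma nonthin_UNIV: "nonthin UNIV"
proof -
  have "eventually (\<lambda>n. ereal (dens_n UNIV n) = 1) sequentially"
    using eventually_ge_at_top[of "1::nat"] by eventually_elim (simp add: dens_n_def)
  then have "(\<lambda>n. ereal (dens_n UNIV n)) \<longlonglongrightarrow> 1"
    by (rule tendsto_eventually)
  then have "upper_density UNIV = 1"
    unfolding upper_density_def by (intro lim_imp_Limsup) auto
  then show ?thesis
    unfolding nonthin_def by simp
qed

lemma stat_conv_const: "a \<in> topspace X \<Longrightarrow> stat_conv X (\<lambda>_. a) UNIV a"
  unfolding stat_conv_def by (simp add: nonthin_UNIV density_zero_empty)

lemma stat_conv_subseq:
  assumes "stat_conv X x M a" and "N \<subseteq> M" and "nonthin N"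
  shows "stat_conv X x N a"
  unfolding stat_conv_def
proof (intro conjI allI impI)
  fix U assume "openin X U \<and> a \<in> U"
  then have "density_zero {n \<in> M. x n \<notin> U}"
    using assms(1) unfolding stat_conv_def by blast
  then show "density_zero {n \<in> N. x n \<notin> U}"
    by (rule density_zero_subset[rotated]) (use assms(2) in auto)
qed (use assms in \<open>auto simp: stat_conv_def\<close>)

lemma stat_conv_subtopology:
  assumes "stat_conv (subtopology X K) x M a"
  shows "stat_conv X x M a"
  unfolding stat_conv_def
proof (intro conjI allI impI)
  fix U assume U: "openin X U \<and> a \<in> U"
  have xK: "\<forall>n\<in>M. x n \<in> K" and "a \<in> K"
    using assms unfolding stat_conv_def by auto
  with U have "openin (subtopology X K) (U \<inter> K) \<and> a \<in> U \<inter> K"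
    by (auto simp: openin_subtopology)
  then have "density_zero {n \<in> M. x n \<notin> U \<inter> K}"
    using assms unfolding stat_conv_def by blast
  moreover have "{n \<in> M. x n \<notin> U \<inter> K} = {n \<in> M. x n \<notin> U}"
    using xK by auto
  ultimately show "density_zero {n \<in> M. x n \<notin> U}"
    by simp
qed (use assms in \<open>auto simp: stat_conv_def\<close>)

lemma stat_conv_Pair:
  assumes x: "stat_conv X x M a" and y: "stat_conv Y y M b"
  shows "stat_conv (prod_topology X Y) (\<lambda>n. (x n, y n)) M (a, b)"
  unfolding stat_conv_def
proof (intro conjI allI impI)
  fix W assume "openin (prod_topology X Y) W \<and> (a, b) \<in> W"
  then obtain U V where UV: "openin X U" "openin Y V" "a \<in> U" "b \<in> V" "U \<times> V \<subseteq> W"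
    unfolding openin_prod_topology_alt by blast
  have "density_zero ({n \<in> M. x n \<notin> U} \<union> {n \<in> M. y n \<notin> V})"
    using x y UV(1-4) unfolding stat_conv_def by (intro density_zero_Un) auto
  moreover have "{n \<in> M. (x n, y n) \<notin> W} \<subseteq> {n \<in> M. x n \<notin> U} \<union> {n \<in> M. y n \<notin> V}"
    using UV(5) by auto
  ultimately show "density_zero {n \<in> M. (x n, y n) \<notin> W}"
    by (rule density_zero_subset[rotated])
qed (use x y in \<open>auto simp: stat_conv_def\<close>)

lemma subset_stat_closure:
  assumes "F \<subseteq> topspace X"
  shows "F \<subseteq> stat_closure X F"
proof
  fix a assume "a \<in> F"
  with assms show "a \<in> stat_closure X F"
    unfolding stat_closure_def
    by (blast intro: nonthin_UNIV stat_conv_const exI[of _ "\<lambda>_. a"] exI[of _ UNIV])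
qed

lemma stat_conv_unique:
  assumes "stat_closed (prod_topology X X) {(x, x) | x. x \<in> topspace X}"
    and a: "stat_conv X x M a" and b: "stat_conv X x M b"
  shows "a = b"
proof -
  define \<Delta> where "\<Delta> = {(x, x) | x. x \<in> topspace X}"
  have ab: "stat_conv (prod_topology X X) (\<lambda>n. (x n, x n)) M (a, b)"
    using a b by (rule stat_conv_Pair)
  then have "(a, b) \<in> topspace (prod_topology X X)" and "nonthin M"
    by (simp_all add: stat_conv_def)
  moreover have "\<forall>n\<in>M. (x n, x n) \<in> \<Delta>"
    using a unfolding stat_conv_def \<Delta>_def by auto
  ultimately have "(a, b) \<in> stat_closure (prod_topology X X) \<Delta>"
    using ab unfolding stat_closure_def by (auto intro!: exI[of _ "\<lambda>n. (x n, x n)"])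
  with assms(1) show ?thesis
    unfolding stat_closed_def \<Delta>_def by simp
qed

theorem mainTheorem10:
  fixes X :: "'a topology" and K :: "'a set"
  assumes "stat_closed (prod_topology X X) {(x, x) | x. x \<in> topspace X}"
    and "K \<subseteq> topspace X"
    and "stat_compact (subtopology X K)"
  shows "stat_closed X K"
  unfolding stat_closed_def
proof
  show "stat_closure X K \<subseteq> K"
  proof
    fix a assume "a \<in> stat_closure X K"
    then obtain x M where M: "nonthin M" "\<forall>n\<in>M. x n \<in> K" and a: "stat_conv X x M a"
      unfolding stat_closure_def by blast
    moreover have "\<forall>n\<in>M. x n \<in> topspace (subtopology X K)"
      using M(2) assms(2) by auto
    ultimately obtain N b where N: "N \<subseteq> M" "nonthin N" and b: "stat_conv (subtopology X K) x N b"
      using assms(3) unfolding stat_compact_def by blast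
    have "a = b"
      using assms(1) stat_conv_subseq[OF a N] stat_conv_subtopology[OF b]
      by (rule stat_conv_unique)
    then show "a \<in> K"
      using b unfolding stat_conv_def by simp
  qed
  show "K \<subseteq> stat_closure X K"
    using assms(2) by (rule subset_stat_closure)
qed

end
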